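(* Let $P=\{x_1,\dots,x_n\}\subset\mathbb{R}^d$, let $x$ be a query with nonnegative weights $w_1,\dots,w_n$, and let $Z_h$ be the $(\mathcal{H},\nu)$-hashing-based estimator. Let $\tilde P=\{i\in[n]:p_i>0\}$ and suppose the indices are ordered so that $p_1\ge p_2\ge\dots\ge p_n$. Then $$\mathbb{E}[Z_h]=\frac1n\sum_{i\in\tilde P}w_i\qquad\text{and}\qquad\mathbb{E}[Z_h^2]\le\frac{1}{n^2}\sum_{i\in\tilde P}\frac{w_i^2}{p_i}\left(i+\sum_{j>i}\frac{p_j}{p_i}\right).$$
   Context: Given a family $\mathcal{H}$ of hash functions on $\mathbb{R}^d$ with a probability distribution $\nu$, sample $h\sim\nu$; let $H(x)=\{i\in[n]:h(x_i)=h(x)\}$, let $I(x)$ be a uniformly random element of $H(x)$, or $\perp$ if $H(x)$ is empty, and let $p_i=\Pr_{h\sim\nu}[i\in H(x)]$, with conventions $p_\perp=1$, $w_\perp=0$. The $(\mathcal{H},\nu)$-hashing-based estimator is $Z_h=Z_h(x)=\frac{w_{I(x)}}{p_{I(x)}}\cdot\frac{|H(x)|}{n}$. *)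

theory Defs
  imports "HOL-Probability.Probability"
begin

text \<open>Points are indexed by {1..n}. A random hash function is h :: 'w => real^'d => 'b,
  where 'w is the sample space of the probability space M (the distribution nu).\<close>

definition hbucket :: "(real^'d \<Rightarrow> 'b) \<Rightarrow> (nat \<Rightarrow> real^'d) \<Rightarrow> nat \<Rightarrow> real^'d \<Rightarrow> nat set" where
  "hbucket g P n x = {i \<in> {1..n}. g (P i) = g x}"

definition collprob :: "'w measure \<Rightarrow> ('w \<Rightarrow> real^'d \<Rightarrow> 'b) \<Rightarrow> (nat \<Rightarrow> real^'d) \<Rightarrow> real^'d \<Rightarrow> nat \<Rightarrow> real" where
  "collprob M h P x i = measure M {\<omega> \<in> space M. h \<omega> (P i) = h \<omega> x}"

text \<open>Value of the estimator for a sampled hash (bucket S) and sampled index I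
  (None stands for \<bottom>, with w_\<bottom> = 0 and p_\<bottom> = 1).\<close>
definition Zval :: "(nat \<Rightarrow> real) \<Rightarrow> (nat \<Rightarrow> real) \<Rightarrow> nat \<Rightarrow> nat set \<Rightarrow> nat option \<Rightarrow> real" where
  "Zval w p n S I = (case I of None \<Rightarrow> 0 / 1 | Some i \<Rightarrow> w i / p i) * (real (card S) / real n)"

text \<open>Expectation of a quantity f(h, I(x)) under the two-stage experiment:
  h ~ nu, then I(x) uniform on H(x) (or \<bottom> = None if H(x) is empty).\<close>
definition hexp :: "'w measure \<Rightarrow> ('w \<Rightarrow> real^'d \<Rightarrow> 'b) \<Rightarrow> (nat \<Rightarrow> real^'d) \<Rightarrow> nat \<Rightarrow> real^'d
    \<Rightarrow> ('w \<Rightarrow> nat option \<Rightarrow> real) \<Rightarrow> real" where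
  "hexp M h P n x f = (\<integral>\<omega>. (let S = hbucket (h \<omega>) P n x in
      if S = {} then f \<omega> None else (\<Sum>i\<in>S. f \<omega> (Some i)) / real (card S)) \<partial>M)"

end

theory Submission
  imports Defs
begin

(* Let E_i be the event h(x_i) = h(x), so that p_i = Pr[E_i] and H(x) = {i. E_i occurs}.
   For a fixed h, averaging over the uniform I(x) cancels one factor |H(x)|: the conditional
   mean of Z_h is the sum of w_i / (n p_i) over i in H(x), and the conditional second moment is
   the sum of (w_i / (n p_i))^2 over pairs i, j in H(x). Taking expectations replaces the
   indicator of E_i by p_i and that of E_i \<inter> E_j by Pr[E_i \<inter> E_j], which is at most p_i
   for j \<le> i and at most p_j for j > i. *)

definition collision_event ::
    "'w measure \<Rightarrow> ('w \<Rightarrow> real^'d \<Rightarrow> 'b) \<Rightarrow> (nat \<Rightarrow> real^'d) \<Rightarrow> real^'d \<Rightarrow> nat \<Rightarrow> 'w set"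
  where
  "collision_event M h P x i = {\<omega> \<in> space M. h \<omega> (P i) = h \<omega> x}"

lemma collprob_eq_measure: "collprob M h P x i = measure M (collision_event M h P x i)"
  by (simp add: collprob_def collision_event_def)

lemma hbucket_eq_occurring_collision_events:
  "\<omega> \<in> space M \<Longrightarrow> hbucket (h \<omega>) P n x = {i \<in> {1..n}. \<omega> \<in> collision_event M h P x i}"
  by (auto simp: hbucket_def collision_event_def)

lemma finite_hbucket [simp]: "finite (hbucket g P n x)"
  by (simp add: hbucket_def)

lemma Zval_bucket_mean:
  assumes "finite S"
  shows "(if S = {} then Zval w p n S None else (\<Sum>i\<in>S. Zval w p n S (Some i)) / real (card S))
    = (\<Sum>i\<in>S. w i / p i / real n)"
proof (cases "S = {}")
  case False
  then have "card S > 0"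
    using assms by (simp add: card_gt_0_iff)
  have "(\<Sum>i\<in>S. Zval w p n S (Some i)) / real (card S) = (\<Sum>i\<in>S. Zval w p n S (Some i) / real (card S))"
    by (rule sum_divide_distrib)
  also have "\<dots> = (\<Sum>i\<in>S. w i / p i / real n)"
    using \<open>card S > 0\<close> by (intro sum.cong) (simp_all add: Zval_def)
  finally show ?thesis
    using False by simp
qed (simp add: Zval_def)

lemma Zval_bucket_second_moment:
  assumes "finite S"
  shows "(if S = {} then (Zval w p n S None)\<^sup>2
          else (\<Sum>i\<in>S. (Zval w p n S (Some i))\<^sup>2) / real (card S))
    = (\<Sum>(i, j)\<in>S \<times> S. (w i / p i / real n)\<^sup>2)"
proof (cases "S = {}")
  case False
  then have "card S > 0"
    using assms by (simp add: card_gt_0_iff)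
  have "(\<Sum>i\<in>S. (Zval w p n S (Some i))\<^sup>2) / real (card S)
      = (\<Sum>i\<in>S. (Zval w p n S (Some i))\<^sup>2 / real (card S))"
    by (rule sum_divide_distrib)
  also have "\<dots> = (\<Sum>i\<in>S. \<Sum>j\<in>S. (w i / p i / real n)\<^sup>2)"
    using \<open>card S > 0\<close> by (intro sum.cong) (simp_all add: Zval_def power2_eq_square mult_ac)
  finally show ?thesis
    using False by (simp only: sum.cartesian_product if_False)
qed (simp add: Zval_def)

lemma (in finite_measure) integral_sum_occurring_events:
  assumes "finite I" and "\<And>i. i \<in> I \<Longrightarrow> A i \<in> sets M"
  shows "(\<integral>\<omega>. (\<Sum>i\<in>{i \<in> I. \<omega> \<in> A i}. c i) \<partial>M) = (\<Sum>i\<in>I. measure M (A i) * c i)"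
proof -
  have "(\<Sum>i\<in>{i \<in> I. \<omega> \<in> A i}. c i) = (\<Sum>i\<in>I. indicator (A i) \<omega> * c i)" for \<omega>
    unfolding sum.inter_filter[OF assms(1)] by (intro sum.cong) (auto simp: indicator_def)
  then have "(\<integral>\<omega>. (\<Sum>i\<in>{i \<in> I. \<omega> \<in> A i}. c i) \<partial>M) = (\<integral>\<omega>. (\<Sum>i\<in>I. indicator (A i) \<omega> * c i) \<partial>M)"
    by simp
  also have "\<dots> = (\<Sum>i\<in>I. measure M (A i) * c i)"
    using assms by (subst Bochner_Integration.integral_sum)
      (auto intro!: integrable_mult_left integrable_real_indicator simp: less_top[symmetric])
  finally show ?thesis .
qed

lemma (in finite_measure) sum_measure_Int_le:
  assumes "\<And>j. j \<in> {1..n} \<Longrightarrow> A j \<in> sets M" and "i \<in> {1..n}"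
  shows "(\<Sum>j\<in>{1..n}. measure M (A i \<inter> A j))
    \<le> real i * measure M (A i) + (\<Sum>j\<in>{i<..n}. measure M (A j))"
proof -
  have interval_split: "{1..n} = {1..i} \<union> {i<..n}"
    using assms(2) by auto
  have "(\<Sum>j\<in>{1..n}. measure M (A i \<inter> A j))
      = (\<Sum>j\<in>{1..i}. measure M (A i \<inter> A j)) + (\<Sum>j\<in>{i<..n}. measure M (A i \<inter> A j))"
    unfolding interval_split by (rule sum.union_disjoint) auto
  also have "\<dots> \<le> (\<Sum>j\<in>{1..i}. measure M (A i)) + (\<Sum>j\<in>{i<..n}. measure M (A j))"
    using assms by (intro add_mono sum_mono finite_measure_mono) auto
  finally show ?thesis
    by simp
qed

lemma sum_restrict_positive:
  fixes f p :: "'a \<Rightarrow> real"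
  assumes "finite I" and "\<And>i. i \<in> I \<Longrightarrow> p i \<ge> 0" and "\<And>i. p i = 0 \<Longrightarrow> f i = 0"
  shows "(\<Sum>i\<in>I. f i) = (\<Sum>i\<in>{i \<in> I. p i > 0}. f i)"
  using assms by (intro sum.mono_neutral_right) (auto simp: order.strict_iff_order)

lemma hexp_Zval:
  assumes "prob_space M" and "\<And>i. i \<in> {1..n} \<Longrightarrow> collision_event M h P x i \<in> sets M"
  shows "hexp M h P n x (\<lambda>\<omega> I. Zval w (collprob M h P x) n (hbucket (h \<omega>) P n x) I)
    = (1 / real n) * (\<Sum>i\<in>{i \<in> {1..n}. collprob M h P x i > 0}. w i)"
proof -
  interpret prob_space M by fact
  define p where "p = collprob M h P x"
  define E where "E = collision_event M h P x"
  have p_E: "p i = measure M (E i)" for i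
    by (simp add: p_def E_def collprob_eq_measure)
  have "hexp M h P n x (\<lambda>\<omega> I. Zval w p n (hbucket (h \<omega>) P n x) I)
      = (\<integral>\<omega>. (\<Sum>i\<in>{i \<in> {1..n}. \<omega> \<in> E i}. w i / p i / real n) \<partial>M)"
    unfolding hexp_def Let_def E_def
    by (intro Bochner_Integration.integral_cong refl)
      (simp only: hbucket_eq_occurring_collision_events, rule Zval_bucket_mean, simp)
  also have "\<dots> = (\<Sum>i\<in>{1..n}. p i * (w i / p i / real n))"
    unfolding p_E by (rule integral_sum_occurring_events) (simp_all add: E_def assms(2))
  also have "\<dots> = (\<Sum>i\<in>{i \<in> {1..n}. p i > 0}. p i * (w i / p i / real n))"
    by (rule sum_restrict_positive) (simp_all add: p_E)
  also have "\<dots> = (1 / real n) * (\<Sum>i\<in>{i \<in> {1..n}. p i > 0}. w i)"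
    by (simp add: sum_distrib_left)
  finally show ?thesis
    by (simp add: p_def)
qed

lemma hexp_Zval_square_le:
  assumes "prob_space M" and "\<And>i. i \<in> {1..n} \<Longrightarrow> collision_event M h P x i \<in> sets M"
  shows "hexp M h P n x (\<lambda>\<omega> I. (Zval w (collprob M h P x) n (hbucket (h \<omega>) P n x) I)\<^sup>2)
    \<le> (1 / (real n)\<^sup>2) * (\<Sum>i\<in>{i \<in> {1..n}. collprob M h P x i > 0}.
          (w i)\<^sup>2 / collprob M h P x i *
          (real i + (\<Sum>j\<in>{i<..n}. collprob M h P x j / collprob M h P x i)))"
proof -
  interpret prob_space M by fact
  define p where "p = collprob M h P x"
  define E where "E = collision_event M h P x"
  have p_E: "p i = measure M (E i)" for i
    by (simp add: p_def E_def collprob_eq_measure)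
  have bucket_pairs: "hbucket (h \<omega>) P n x \<times> hbucket (h \<omega>) P n x
      = {q \<in> {1..n} \<times> {1..n}. \<omega> \<in> (case q of (i, j) \<Rightarrow> E i \<inter> E j)}" if "\<omega> \<in> space M" for \<omega>
    using that by (auto simp: E_def hbucket_eq_occurring_collision_events)
  have "hexp M h P n x (\<lambda>\<omega> I. (Zval w p n (hbucket (h \<omega>) P n x) I)\<^sup>2)
      = (\<integral>\<omega>. (\<Sum>q\<in>{q \<in> {1..n} \<times> {1..n}. \<omega> \<in> (case q of (i, j) \<Rightarrow> E i \<inter> E j)}.
              case q of (i, j) \<Rightarrow> (w i / p i / real n)\<^sup>2) \<partial>M)"
    unfolding hexp_def Let_def
    by (intro Bochner_Integration.integral_cong refl)
      (simp only: Zval_bucket_second_moment[OF finite_hbucket] bucket_pairs)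
  also have "\<dots> = (\<Sum>q\<in>{1..n} \<times> {1..n}.
      measure M (case q of (i, j) \<Rightarrow> E i \<inter> E j) * (case q of (i, j) \<Rightarrow> (w i / p i / real n)\<^sup>2))"
    by (rule integral_sum_occurring_events) (auto simp: E_def assms(2))
  also have "\<dots> = (\<Sum>i\<in>{1..n}. (\<Sum>j\<in>{1..n}. measure M (E i \<inter> E j)) * (w i / p i / real n)\<^sup>2)"
    by (simp add: sum.cartesian_product split_def sum_distrib_right)
  also have "\<dots> \<le> (\<Sum>i\<in>{1..n}. (real i * p i + (\<Sum>j\<in>{i<..n}. p j)) * (w i / p i / real n)\<^sup>2)"
    unfolding p_E E_def by (intro sum_mono mult_right_mono sum_measure_Int_le assms(2)) simp_all
  \<comment> \<open>Indices with p_i = 0 drop out because w_i / 0 = 0.\<close>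
  also have "\<dots> = (\<Sum>i\<in>{i \<in> {1..n}. p i > 0}.
      (real i * p i + (\<Sum>j\<in>{i<..n}. p j)) * (w i / p i / real n)\<^sup>2)"
    by (rule sum_restrict_positive) (simp_all add: p_E)
  also have "\<dots> = (1 / (real n)\<^sup>2) * (\<Sum>i\<in>{i \<in> {1..n}. p i > 0}.
      (w i)\<^sup>2 / p i * (real i + (\<Sum>j\<in>{i<..n}. p j / p i)))"
    unfolding sum_distrib_left
    by (intro sum.cong) (auto simp: sum_divide_distrib[symmetric] field_simps power2_eq_square)
  finally show ?thesis
    by (simp add: p_def)
qed

theorem lemma3:
  fixes M :: "'w measure" and h :: "'w \<Rightarrow> real^'d \<Rightarrow> 'b"
    and P :: "nat \<Rightarrow> real^'d" and x :: "real^'d" and n :: nat and w :: "nat \<Rightarrow> real"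
  assumes "prob_space M"
    and meas: "\<And>i. i \<in> {1..n} \<Longrightarrow> {\<omega> \<in> space M. h \<omega> (P i) = h \<omega> x} \<in> sets M"
    and wnn: "\<And>i. i \<in> {1..n} \<Longrightarrow> w i \<ge> 0"
    and ord: "\<And>i j. 1 \<le> i \<Longrightarrow> i \<le> j \<Longrightarrow> j \<le> n \<Longrightarrow> collprob M h P x j \<le> collprob M h P x i"
  shows "(hexp M h P n x (\<lambda>\<omega> I. Zval w (collprob M h P x) n (hbucket (h \<omega>) P n x) I)
           = (1 / real n) * (\<Sum>i\<in>{i \<in> {1..n}. collprob M h P x i > 0}. w i)) \<and>
         (hexp M h P n x (\<lambda>\<omega> I. (Zval w (collprob M h P x) n (hbucket (h \<omega>) P n x) I)\<^sup>2)
           \<le> (1 / (real n)\<^sup>2) * (\<Sum>i\<in>{i \<in> {1..n}. collprob M h P x i > 0}.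
                (w i)\<^sup>2 / collprob M h P x i *
                (real i + (\<Sum>j\<in>{i<..n}. collprob M h P x j / collprob M h P x i))))"
proof -
  \<comment> \<open>Pr[E_i \<inter> E_j] \<le> min(p_i, p_j) gives the bound for any order of the indices and any
    signs of the weights, so \<open>wnn\<close> and \<open>ord\<close> are not needed.\<close>
  have "\<And>i. i \<in> {1..n} \<Longrightarrow> collision_event M h P x i \<in> sets M"
    using meas by (simp add: collision_event_def)
  then show ?thesis
    using hexp_Zval hexp_Zval_square_le \<open>prob_space M\<close> by blast
qed

end
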